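(* Let $\Gamma$ be a finite connected $2$-distance-transitive graph of valency $k\ge3$. Then one of the following holds: (1) $\Gamma$ is a distance-transitive strongly regular graph; (2) $\Gamma$ has diameter $d\ge3$ and $b_1\ge\max\{c_2,\frac13(k+1)\}$.
   Context: $\Gamma$ is $2$-distance-transitive if its diameter is at least $2$, $\mathrm{Aut}(\Gamma)$ is vertex-transitive, and $\mathrm{Aut}(\Gamma)_u$ is transitive on $\Gamma(u)$ and $\Gamma_2(u)$ for each $u$. $b_1$ is the number of neighbours of a vertex $w\in\Gamma(u)$ lying at distance $2$ from $u$, and $c_2$ is the number of common neighbours of two vertices at distance $2$. Distance-transitive means $\mathrm{Aut}(\Gamma)$ is transitive on ordered pairs of vertices at distance $i$ for each $i$. *)

theory Defs
  imports Main
begin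

definition graph :: "'a set \<Rightarrow> ('a \<Rightarrow> 'a \<Rightarrow> bool) \<Rightarrow> bool" where
  "graph V E \<longleftrightarrow> finite V \<and> (\<forall>x y. E x y \<longrightarrow> x \<in> V \<and> y \<in> V)
     \<and> (\<forall>x y. E x y \<longrightarrow> E y x) \<and> (\<forall>x. \<not> E x x)"

definition nbhd :: "('a \<Rightarrow> 'a \<Rightarrow> bool) \<Rightarrow> 'a \<Rightarrow> 'a set" where
  "nbhd E u = {v. E u v}"

inductive walk :: "('a \<Rightarrow> 'a \<Rightarrow> bool) \<Rightarrow> 'a \<Rightarrow> 'a \<Rightarrow> nat \<Rightarrow> bool" for E where
  walk0: "walk E u u 0"
| walkS: "E u w \<Longrightarrow> walk E w v n \<Longrightarrow> walk E u v (Suc n)"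

definition connected_graph :: "'a set \<Rightarrow> ('a \<Rightarrow> 'a \<Rightarrow> bool) \<Rightarrow> bool" where
  "connected_graph V E \<longleftrightarrow> (\<forall>u\<in>V. \<forall>v\<in>V. \<exists>n. walk E u v n)"

definition gdist :: "('a \<Rightarrow> 'a \<Rightarrow> bool) \<Rightarrow> 'a \<Rightarrow> 'a \<Rightarrow> nat" where
  "gdist E u v = (LEAST n. walk E u v n)"

definition sphere :: "'a set \<Rightarrow> ('a \<Rightarrow> 'a \<Rightarrow> bool) \<Rightarrow> nat \<Rightarrow> 'a \<Rightarrow> 'a set" where
  "sphere V E i u = {v \<in> V. gdist E u v = i}"

definition diameter :: "'a set \<Rightarrow> ('a \<Rightarrow> 'a \<Rightarrow> bool) \<Rightarrow> nat" where
  "diameter V E = Max {gdist E u v | u v. u \<in> V \<and> v \<in> V}"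

definition regular :: "'a set \<Rightarrow> ('a \<Rightarrow> 'a \<Rightarrow> bool) \<Rightarrow> nat \<Rightarrow> bool" where
  "regular V E k \<longleftrightarrow> (\<forall>v\<in>V. card (nbhd E v) = k)"

definition automorphisms :: "'a set \<Rightarrow> ('a \<Rightarrow> 'a \<Rightarrow> bool) \<Rightarrow> ('a \<Rightarrow> 'a) set" where
  "automorphisms V E = {\<sigma>. bij_betw \<sigma> V V \<and> (\<forall>x\<in>V. \<forall>y\<in>V. E x y \<longleftrightarrow> E (\<sigma> x) (\<sigma> y))}"

definition vertex_transitive :: "'a set \<Rightarrow> ('a \<Rightarrow> 'a \<Rightarrow> bool) \<Rightarrow> bool" where
  "vertex_transitive V E \<longleftrightarrow>
     (\<forall>u\<in>V. \<forall>v\<in>V. \<exists>\<sigma>\<in>automorphisms V E. \<sigma> u = v)"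

definition stab_transitive_on :: "'a set \<Rightarrow> ('a \<Rightarrow> 'a \<Rightarrow> bool) \<Rightarrow> 'a \<Rightarrow> 'a set \<Rightarrow> bool" where
  "stab_transitive_on V E u S \<longleftrightarrow>
     (\<forall>v\<in>S. \<forall>w\<in>S. \<exists>\<sigma>\<in>automorphisms V E. \<sigma> u = u \<and> \<sigma> v = w)"

definition two_distance_transitive :: "'a set \<Rightarrow> ('a \<Rightarrow> 'a \<Rightarrow> bool) \<Rightarrow> bool" where
  "two_distance_transitive V E \<longleftrightarrow>
     diameter V E \<ge> 2 \<and> vertex_transitive V E \<and>
     (\<forall>u\<in>V. stab_transitive_on V E u (sphere V E 1 u)
           \<and> stab_transitive_on V E u (sphere V E 2 u))"

definition distance_transitive :: "'a set \<Rightarrow> ('a \<Rightarrow> 'a \<Rightarrow> bool) \<Rightarrow> bool" where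
  "distance_transitive V E \<longleftrightarrow>
     (\<forall>u\<in>V. \<forall>v\<in>V. \<forall>x\<in>V. \<forall>y\<in>V. gdist E u v = gdist E x y \<longrightarrow>
        (\<exists>\<sigma>\<in>automorphisms V E. \<sigma> u = x \<and> \<sigma> v = y))"

definition strongly_regular :: "'a set \<Rightarrow> ('a \<Rightarrow> 'a \<Rightarrow> bool) \<Rightarrow> bool" where
  "strongly_regular V E \<longleftrightarrow> (\<exists>k lam mu. regular V E k \<and>
     (\<forall>u\<in>V. \<forall>v\<in>V. E u v \<longrightarrow> card (nbhd E u \<inter> nbhd E v) = lam) \<and>
     (\<forall>u\<in>V. \<forall>v\<in>V. u \<noteq> v \<and> \<not> E u v \<longrightarrow> card (nbhd E u \<inter> nbhd E v) = mu))"

definition b1 :: "'a set \<Rightarrow> ('a \<Rightarrow> 'a \<Rightarrow> bool) \<Rightarrow> 'a \<Rightarrow> 'a \<Rightarrow> nat" where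
  "b1 V E u w = card (nbhd E w \<inter> sphere V E 2 u)"

definition c2 :: "('a \<Rightarrow> 'a \<Rightarrow> bool) \<Rightarrow> 'a \<Rightarrow> 'a \<Rightarrow> nat" where
  "c2 E u v = card (nbhd E u \<inter> nbhd E v)"

end

theory Submission
  imports Defs
begin

(* If all distances are at most 2, then 2-distance transitivity is distance transitivity, and
   since automorphisms preserve the number of common neighbours, this number is constant on
   edges and on non-edges: the graph is strongly regular.
   Otherwise there is a geodesic a, b, x with d(a,b) = 2 and d(a,x) = 3; every common neighbour
   of a and b lies in \<Gamma>(b) \<inter> \<Gamma>_2(x), so c_2 <= b_1 by arc transitivity. Now let u w be an
   edge and v \<in> \<Gamma>(w) \<inter> \<Gamma>_2(u), which exists as b_1 >= c_2 > 0. Splitting \<Gamma>(w) by distance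
   from u gives k = 1 + a_1 + b_1. The sets \<Gamma>(u) \<inter> \<Gamma>(w) and \<Gamma>(v) \<inter> \<Gamma>(w), both of size a_1,
   avoid u and v, and their intersection together with w consists of common neighbours of u
   and v. Hence 2 a_1 <= (k - 2) + (c_2 - 1) <= k + b_1 - 3, that is k + 1 <= 3 b_1. *)

definition a1 :: "('a \<Rightarrow> 'a \<Rightarrow> bool) \<Rightarrow> 'a \<Rightarrow> 'a \<Rightarrow> nat" where
  "a1 E u w = card (nbhd E u \<inter> nbhd E w)"

locale finite_graph =
  fixes V :: "'a set" and E :: "'a \<Rightarrow> 'a \<Rightarrow> bool"
  assumes graph: "graph V E"
begin

lemma adj_in_V: "E x y \<Longrightarrow> x \<in> V" "E x y \<Longrightarrow> y \<in> V"
  using graph by (auto simp: graph_def)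

lemma adj_sym: "E x y \<Longrightarrow> E y x"
  using graph by (auto simp: graph_def)

lemma adj_irrefl: "\<not> E x x"
  using graph by (auto simp: graph_def)

lemma finite_V: "finite V"
  using graph by (auto simp: graph_def)

lemma nbhd_subset: "nbhd E u \<subseteq> V"
  using adj_in_V by (auto simp: nbhd_def)

lemma sphere_subset: "sphere V E i u \<subseteq> V"
  by (auto simp: sphere_def)

lemma finite_nbhd: "finite (nbhd E u)"
  using finite_V nbhd_subset by (rule finite_subset[rotated])

lemma walk_snoc: "walk E u v n \<Longrightarrow> E v x \<Longrightarrow> walk E u x (Suc n)"
  by (induction rule: walk.induct) (auto intro: walk.intros)

lemma walk_append: "walk E u v n \<Longrightarrow> walk E v x m \<Longrightarrow> walk E u x (n + m)"
  by (induction rule: walk.induct) (auto intro: walk.intros)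

lemma walk_rev: "walk E u v n \<Longrightarrow> walk E v u n"
  by (induction rule: walk.induct) (auto intro: walk.intros walk_snoc adj_sym)

lemma walk_split:
  assumes "walk E u v n" "j \<le> n"
  obtains x where "walk E u x j" "walk E x v (n - j)"
  using assms
proof (induction arbitrary: j thesis rule: walk.induct)
  case (walk0 u)
  then show ?case by (auto intro: walk.intros)
next
  case (walkS u w v n)
  show ?case
  proof (cases j)
    case 0
    then show ?thesis using walkS by (auto intro: walk.intros)
  next
    case (Suc j')
    then obtain x where "walk E w x j'" "walk E x v (n - j')"
      using walkS by (metis Suc_le_mono)
    then show ?thesis using walkS Suc by (auto intro: walk.intros)
  qed
qed

lemma walk_in_V: "walk E u v n \<Longrightarrow> u \<in> V \<Longrightarrow> v \<in> V"
  by (induction rule: walk.induct) (auto dest: adj_in_V)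

lemma walk_0_iff: "walk E u v 0 \<longleftrightarrow> u = v"
  by (auto elim: walk.cases intro: walk.intros)

lemma walk_Suc_0_iff [simp]: "walk E u v (Suc 0) \<longleftrightarrow> E u v"
  by (auto elim: walk.cases simp: walk_0_iff intro: walk.intros)

lemma walk_2: "E u w \<Longrightarrow> E w v \<Longrightarrow> walk E u v 2"
  by (auto intro!: walk.intros simp: numeral_2_eq_2)

lemma gdist_le: "walk E u v n \<Longrightarrow> gdist E u v \<le> n"
  unfolding gdist_def by (rule Least_le)

lemma gdist_self [simp]: "gdist E u u = 0"
  using gdist_le[OF walk.walk0] by simp

lemma automorphismsD:
  assumes "\<sigma> \<in> automorphisms V E"
  shows "bij_betw \<sigma> V V" "inj_on \<sigma> V" "\<sigma> ` V = V" "x \<in> V \<Longrightarrow> \<sigma> x \<in> V"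
    and "x \<in> V \<Longrightarrow> y \<in> V \<Longrightarrow> E (\<sigma> x) (\<sigma> y) \<longleftrightarrow> E x y"
  using assms unfolding automorphisms_def bij_betw_def by auto

lemma automorphism_comp:
  assumes "\<sigma> \<in> automorphisms V E" "\<tau> \<in> automorphisms V E"
  shows "\<sigma> \<circ> \<tau> \<in> automorphisms V E"
  using assms bij_betw_trans automorphismsD(4,5)[OF assms(2)]
  unfolding automorphisms_def by auto

lemma automorphism_inv_into:
  assumes "\<sigma> \<in> automorphisms V E"
  shows "inv_into V \<sigma> \<in> automorphisms V E"
proof -
  note \<sigma> = automorphismsD[OF assms]
  have "E x y \<longleftrightarrow> E (inv_into V \<sigma> x) (inv_into V \<sigma> y)" if "x \<in> V" "y \<in> V" for x y
    using \<sigma>(3,5) that by (metis f_inv_into_f inv_into_into)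
  then show ?thesis
    using bij_betw_inv_into[OF \<sigma>(1)] by (auto simp: automorphisms_def)
qed

lemma automorphism_walk:
  assumes "\<sigma> \<in> automorphisms V E"
  shows "walk E u v n \<Longrightarrow> walk E (\<sigma> u) (\<sigma> v) n"
proof (induction rule: walk.induct)
  case (walkS u w v n)
  then have "E (\<sigma> u) (\<sigma> w)"
    using automorphismsD(5)[OF assms] adj_in_V by blast
  with walkS show ?case
    by (auto intro: walk.intros)
qed (auto intro: walk.intros)

lemma automorphism_walk_iff:
  assumes "\<sigma> \<in> automorphisms V E" "u \<in> V" "v \<in> V"
  shows "walk E (\<sigma> u) (\<sigma> v) n \<longleftrightarrow> walk E u v n"
  using automorphism_walk[OF automorphism_inv_into[OF assms(1)], of "\<sigma> u" "\<sigma> v" n]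
    automorphism_walk[OF assms(1)] inv_into_f_f[OF automorphismsD(2)[OF assms(1)]] assms(2,3)
  by auto

lemma automorphism_gdist:
  "\<sigma> \<in> automorphisms V E \<Longrightarrow> u \<in> V \<Longrightarrow> v \<in> V \<Longrightarrow> gdist E (\<sigma> u) (\<sigma> v) = gdist E u v"
  by (simp add: gdist_def automorphism_walk_iff)

lemma automorphism_image_nbhd:
  assumes "\<sigma> \<in> automorphisms V E" "u \<in> V"
  shows "\<sigma> ` nbhd E u = nbhd E (\<sigma> u)"
proof -
  note \<sigma> = automorphismsD[OF assms(1)]
  have "nbhd E (\<sigma> u) \<subseteq> \<sigma> ` nbhd E u"
  proof
    fix z assume z: "z \<in> nbhd E (\<sigma> u)"
    then obtain y where "y \<in> V" "z = \<sigma> y"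
      using \<sigma>(3) nbhd_subset by blast
    with z show "z \<in> \<sigma> ` nbhd E u"
      using \<sigma>(5) assms(2) by (auto simp: nbhd_def)
  qed
  then show ?thesis
    using \<sigma>(5) assms(2) adj_in_V by (auto simp: nbhd_def)
qed

lemma automorphism_image_sphere:
  assumes "\<sigma> \<in> automorphisms V E" "u \<in> V"
  shows "\<sigma> ` sphere V E i u = sphere V E i (\<sigma> u)"
proof -
  note \<sigma> = automorphismsD[OF assms(1)]
  have "sphere V E i (\<sigma> u) \<subseteq> \<sigma> ` sphere V E i u"
  proof
    fix z assume z: "z \<in> sphere V E i (\<sigma> u)"
    then obtain y where "y \<in> V" "z = \<sigma> y"
      using \<sigma>(3) sphere_subset by blast
    with z show "z \<in> \<sigma> ` sphere V E i u"
      using automorphism_gdist[OF assms] by (auto simp: sphere_def)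
  qed
  then show ?thesis
    using \<sigma>(4) automorphism_gdist[OF assms] by (auto simp: sphere_def)
qed

lemma automorphism_card_image_Int:
  assumes "\<sigma> \<in> automorphisms V E" "A \<subseteq> V" "B \<subseteq> V"
  shows "card (\<sigma> ` A \<inter> \<sigma> ` B) = card (A \<inter> B)"
proof -
  have "inj_on \<sigma> V"
    using automorphismsD(2)[OF assms(1)] .
  then show ?thesis
    using assms(2,3) by (metis card_image inj_on_image_Int inj_on_subset le_infI1)
qed

lemma automorphism_card_common_nbhd:
  assumes "\<sigma> \<in> automorphisms V E" "u \<in> V" "v \<in> V"
  shows "card (nbhd E (\<sigma> u) \<inter> nbhd E (\<sigma> v)) = card (nbhd E u \<inter> nbhd E v)"
  using automorphism_card_image_Int[OF assms(1) nbhd_subset nbhd_subset]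
  by (simp add: automorphism_image_nbhd[symmetric] assms)

lemma automorphism_b1:
  assumes "\<sigma> \<in> automorphisms V E" "u \<in> V" "w \<in> V"
  shows "b1 V E (\<sigma> u) (\<sigma> w) = b1 V E u w"
  using automorphism_card_image_Int[OF assms(1) nbhd_subset sphere_subset]
  by (simp add: b1_def assms
      automorphism_image_nbhd[symmetric] automorphism_image_sphere[symmetric])

end

locale connected_finite_graph = finite_graph +
  assumes connected: "connected_graph V E"
begin

lemma walk_gdist: "u \<in> V \<Longrightarrow> v \<in> V \<Longrightarrow> walk E u v (gdist E u v)"
  using connected unfolding connected_graph_def gdist_def by (meson LeastI_ex)

lemma gdist_sym: "u \<in> V \<Longrightarrow> v \<in> V \<Longrightarrow> gdist E u v = gdist E v u"
  by (meson antisym gdist_le walk_gdist walk_rev)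

lemma gdist_triangle:
  "u \<in> V \<Longrightarrow> v \<in> V \<Longrightarrow> x \<in> V \<Longrightarrow> gdist E u x \<le> gdist E u v + gdist E v x"
  by (meson gdist_le walk_gdist walk_append)

lemma gdist_eq_0_iff: "u \<in> V \<Longrightarrow> v \<in> V \<Longrightarrow> gdist E u v = 0 \<longleftrightarrow> u = v"
  using walk_gdist walk_0_iff by fastforce

lemma gdist_eq_1_iff: "u \<in> V \<Longrightarrow> v \<in> V \<Longrightarrow> gdist E u v = 1 \<longleftrightarrow> E u v"
proof
  assume "u \<in> V" "v \<in> V" "gdist E u v = 1"
  then show "E u v"
    using walk_gdist by fastforce
next
  assume uv: "u \<in> V" "v \<in> V" "E u v"
  then have "gdist E u v \<le> 1"
    using gdist_le[of u v 1] by simp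
  moreover have "gdist E u v \<noteq> 0"
    using uv gdist_eq_0_iff adj_irrefl by blast
  ultimately show "gdist E u v = 1"
    by linarith
qed

lemma gdist_adj: "E u v \<Longrightarrow> gdist E u v = 1"
  using gdist_eq_1_iff adj_in_V by blast

lemma gdist_le_2: "E u w \<Longrightarrow> E w v \<Longrightarrow> gdist E u v \<le> 2"
  by (rule gdist_le[OF walk_2])

lemma gdist_eq_2:
  assumes "E u w" "E w v" "u \<noteq> v" "\<not> E u v"
  shows "gdist E u v = 2"
proof -
  have "u \<in> V" "v \<in> V"
    using assms(1,2) adj_in_V by blast+
  then have "gdist E u v \<noteq> 0" "gdist E u v \<noteq> 1"
    using assms(3,4) gdist_eq_0_iff gdist_eq_1_iff by auto
  then show ?thesis
    using gdist_le_2[OF assms(1,2)] by linarith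
qed

lemma gdist_eq_2E:
  assumes "u \<in> V" "v \<in> V" "gdist E u v = 2"
  obtains w where "E u w" "E w v"
proof -
  obtain w where "walk E u w 1" "walk E w v (2 - 1)"
    using walk_gdist[OF assms(1,2)] assms(3) by (metis walk_split one_le_numeral)
  then show ?thesis
    using that by simp
qed

lemma gdist_le_diameter: "u \<in> V \<Longrightarrow> v \<in> V \<Longrightarrow> gdist E u v \<le> diameter V E"
proof -
  assume "u \<in> V" "v \<in> V"
  moreover have "{gdist E u v | u v. u \<in> V \<and> v \<in> V} = (\<lambda>(u, v). gdist E u v) ` (V \<times> V)"
    by auto
  ultimately show ?thesis
    unfolding diameter_def using finite_V by (intro Max_ge) auto
qed

lemma distance_3_pathE:
  assumes "a \<in> V" "c \<in> V" "gdist E a c \<ge> 3"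
  obtains b x where "gdist E a b = 2" "E b x" "gdist E a x = 3"
proof -
  obtain x where ax: "walk E a x 3" and xc: "walk E x c (gdist E a c - 3)"
    using walk_split[OF walk_gdist[OF assms(1,2)] assms(3)] .
  have x: "x \<in> V"
    using walk_in_V[OF ax assms(1)] .
  have "gdist E a c \<le> gdist E a x + gdist E x c"
    using gdist_triangle assms(1,2) x by blast
  then have dx: "gdist E a x = 3"
    using gdist_le[OF ax] gdist_le[OF xc] assms(3) by linarith
  obtain b where ab: "walk E a b 2" and bx: "E b x"
    using walk_split[OF ax, of 2] by auto
  have "gdist E a x \<le> gdist E a b + 1"
    using gdist_triangle[OF assms(1) adj_in_V[OF bx]] gdist_adj[OF bx] by simp
  then have "gdist E a b = 2"
    using gdist_le[OF ab] dx by linarith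
  with bx dx show ?thesis
    using that by blast
qed

lemma c2_pos:
  assumes "u \<in> V" "v \<in> V" "gdist E u v = 2"
  shows "c2 E u v > 0"
proof -
  obtain w where "E u w" "E w v"
    using gdist_eq_2E[OF assms] .
  then have "w \<in> nbhd E u \<inter> nbhd E v"
    by (simp add: nbhd_def adj_sym)
  then show ?thesis
    unfolding c2_def using finite_nbhd card_gt_0_iff by blast
qed

lemma card_nbhd_eq_a1_b1:
  assumes "E u w"
  shows "card (nbhd E w) = 1 + a1 E u w + b1 V E u w"
proof -
  define P where "P = nbhd E u \<inter> nbhd E w"
  define S where "S = nbhd E w \<inter> sphere V E 2 u"
  have "y \<in> S" if "y \<in> nbhd E w" "y \<noteq> u" "\<not> E u y" for y
    using that gdist_eq_2[OF assms] adj_in_V by (auto simp: S_def sphere_def nbhd_def)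
  then have "nbhd E w = insert u (P \<union> S)"
    using assms adj_sym by (auto simp: P_def S_def nbhd_def)
  moreover have "u \<notin> P \<union> S" "P \<inter> S = {}"
    using adj_irrefl gdist_adj by (auto simp: P_def S_def nbhd_def sphere_def)
  moreover have "finite P" "finite S"
    using finite_nbhd by (auto simp: P_def S_def)
  ultimately have "card (nbhd E w) = 1 + card P + card S"
    by (simp add: card_Un_disjoint)
  then show ?thesis
    by (simp add: a1_def b1_def P_def S_def)
qed

(* Inclusion-exclusion for \<Gamma>(u) \<inter> \<Gamma>(w) and \<Gamma>(v) \<inter> \<Gamma>(w) inside \<Gamma>(w) - {u, v}. *)
lemma a1_add_a1_le:
  assumes "E u w" "E w v" "gdist E u v = 2"
  shows "a1 E u w + a1 E v w + 3 \<le> card (nbhd E w) + c2 E u v"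
proof -
  define P where "P = nbhd E u \<inter> nbhd E w"
  define Q where "Q = nbhd E v \<inter> nbhd E w"
  have "u \<noteq> v" "\<not> E u v"
    using assms adj_in_V gdist_eq_0_iff gdist_eq_1_iff by force+
  have finite: "finite P" "finite Q"
    using finite_nbhd by (auto simp: P_def Q_def)
  have "{u, v} \<subseteq> nbhd E w"
    using assms adj_sym by (auto simp: nbhd_def)
  moreover have "card {u, v} = 2"
    using \<open>u \<noteq> v\<close> by simp
  ultimately have "card (nbhd E w - {u, v}) + 2 = card (nbhd E w)"
    using finite_nbhd card_mono[of "nbhd E w" "{u, v}"] by (simp add: card_Diff_subset)
  moreover have "P \<union> Q \<subseteq> nbhd E w - {u, v}"
    using adj_irrefl adj_sym \<open>\<not> E u v\<close> by (auto simp: P_def Q_def nbhd_def)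
  then have "card (P \<union> Q) \<le> card (nbhd E w - {u, v})"
    using finite_nbhd by (simp add: card_mono)
  moreover have "insert w (P \<inter> Q) \<subseteq> nbhd E u \<inter> nbhd E v" "w \<notin> P \<inter> Q"
    using assms adj_sym adj_irrefl by (auto simp: P_def Q_def nbhd_def)
  then have "card (P \<inter> Q) + 1 \<le> c2 E u v"
    unfolding c2_def using finite finite_nbhd
    by (metis Suc_eq_plus1 card_insert_disjoint card_mono finite_Int)
  moreover have "card (P \<union> Q) + card (P \<inter> Q) = a1 E u w + a1 E v w"
    using card_Un_Int[OF finite] by (simp add: a1_def P_def Q_def)
  ultimately show ?thesis
    by linarith
qed

lemma c2_le_b1_at_distance_3:
  assumes "a \<in> V" "E b x" "gdist E a x = 3"
  shows "c2 E a b \<le> b1 V E x b"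
proof -
  have "y \<in> sphere V E 2 x" if "E a y" "E b y" for y
  proof -
    have "x \<in> V" "y \<in> V"
      using that assms adj_in_V by blast+
    then have "gdist E a x \<le> 1 + gdist E x y"
      using gdist_triangle[OF assms(1)] gdist_adj[OF that(1)] gdist_sym by metis
    then show ?thesis
      using gdist_le_2[OF adj_sym[OF assms(2)] that(2)] assms(3) \<open>y \<in> V\<close>
      by (simp add: sphere_def)
  qed
  then have "nbhd E a \<inter> nbhd E b \<subseteq> nbhd E b \<inter> sphere V E 2 x"
    by (auto simp: nbhd_def)
  then show ?thesis
    unfolding c2_def b1_def by (simp add: card_mono finite_nbhd)
qed

end

locale two_distance_transitive_graph = connected_finite_graph +
  assumes two_distance_transitive: "two_distance_transitive V E"
begin

lemma exists_automorphism_if_gdist_le_2: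
  assumes "u \<in> V" "v \<in> V" "x \<in> V" "y \<in> V"
    and "gdist E x y = gdist E u v" "gdist E u v \<le> 2"
  shows "\<exists>\<sigma>\<in>automorphisms V E. \<sigma> u = x \<and> \<sigma> v = y"
proof -
  obtain \<tau> where \<tau>: "\<tau> \<in> automorphisms V E" "\<tau> u = x"
    using two_distance_transitive assms(1,3)
    unfolding two_distance_transitive_def vertex_transitive_def by blast
  show ?thesis
  proof (cases "u = v")
    case True
    then have "x = y"
      using assms gdist_eq_0_iff by simp
    with True \<tau> show ?thesis
      by blast
  next
    case False
    define i where "i = gdist E u v"
    have "i = 1 \<or> i = 2"
      using False assms(1,2,6) gdist_eq_0_iff unfolding i_def by fastforce
    then have "stab_transitive_on V E x (sphere V E i x)"
      using two_distance_transitive assms(3) unfolding two_distance_transitive_def by auto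
    moreover have "\<tau> v \<in> sphere V E i x" "y \<in> sphere V E i x"
      using automorphism_gdist[OF \<tau>(1) assms(1,2)] automorphismsD(4)[OF \<tau>(1)] \<tau>(2) assms
      by (auto simp: sphere_def i_def)
    ultimately obtain \<rho> where \<rho>: "\<rho> \<in> automorphisms V E" "\<rho> x = x" "\<rho> (\<tau> v) = y"
      unfolding stab_transitive_on_def by blast
    then show ?thesis
      using automorphism_comp[OF \<rho>(1) \<tau>(1)] \<tau>(2) by (intro bexI[of _ "\<rho> \<circ> \<tau>"]) auto
  qed
qed

lemma distance_transitive_if_gdist_le_2:
  assumes "\<forall>u\<in>V. \<forall>v\<in>V. gdist E u v \<le> 2"
  shows "distance_transitive V E"
  using exists_automorphism_if_gdist_le_2 assms unfolding distance_transitive_def by metis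

lemma a1_eq:
  assumes "E u w" "E x y"
  shows "a1 E u w = a1 E x y"
proof -
  obtain \<sigma> where "\<sigma> \<in> automorphisms V E" "\<sigma> u = x" "\<sigma> w = y"
    using exists_automorphism_if_gdist_le_2[of u w x y] assms adj_in_V gdist_adj by force
  then show ?thesis
    using automorphism_card_common_nbhd assms adj_in_V unfolding a1_def by metis
qed

lemma b1_eq:
  assumes "E u w" "E x y"
  shows "b1 V E u w = b1 V E x y"
proof -
  obtain \<sigma> where "\<sigma> \<in> automorphisms V E" "\<sigma> u = x" "\<sigma> w = y"
    using exists_automorphism_if_gdist_le_2[of u w x y] assms adj_in_V gdist_adj by force
  then show ?thesis
    using automorphism_b1 assms adj_in_V by metis
qed

lemma c2_eq:
  assumes "u \<in> V" "v \<in> V" "x \<in> V" "y \<in> V" "gdist E u v = 2" "gdist E x y = 2"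
  shows "c2 E u v = c2 E x y"
proof -
  obtain \<sigma> where "\<sigma> \<in> automorphisms V E" "\<sigma> u = x" "\<sigma> v = y"
    using exists_automorphism_if_gdist_le_2[of u v x y] assms by force
  then show ?thesis
    using automorphism_card_common_nbhd assms unfolding c2_def by metis
qed

lemma strongly_regular_if_gdist_le_2:
  assumes "regular V E k" "\<forall>u\<in>V. \<forall>v\<in>V. gdist E u v \<le> 2"
  shows "strongly_regular V E"
proof -
  have "\<exists>lam. \<forall>u\<in>V. \<forall>v\<in>V. E u v \<longrightarrow> card (nbhd E u \<inter> nbhd E v) = lam"
    using a1_eq unfolding a1_def by metis
  moreover have "gdist E u v = 2" if "u \<in> V" "v \<in> V" "u \<noteq> v" "\<not> E u v" for u v
  proof -
    have "gdist E u v \<noteq> 0" "gdist E u v \<noteq> 1"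
      using that gdist_eq_0_iff gdist_eq_1_iff by auto
    then show ?thesis
      using assms(2) that(1,2) by force
  qed
  then have "\<exists>mu. \<forall>u\<in>V. \<forall>v\<in>V. u \<noteq> v \<and> \<not> E u v \<longrightarrow> card (nbhd E u \<inter> nbhd E v) = mu"
    using c2_eq unfolding c2_def by metis
  ultimately show ?thesis
    using assms(1) unfolding strongly_regular_def by blast
qed

lemma c2_le_b1_if_gdist_ge_3:
  assumes "a \<in> V" "c \<in> V" "gdist E a c \<ge> 3"
    and "E u w" "v \<in> V" "gdist E u v = 2"
  shows "c2 E u v \<le> b1 V E u w"
proof -
  obtain b x where abx: "gdist E a b = 2" "E b x" "gdist E a x = 3"
    using distance_3_pathE[OF assms(1-3)] .
  have "c2 E u v = c2 E a b"
    using c2_eq assms abx adj_in_V by blast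
  also have "\<dots> \<le> b1 V E x b"
    using c2_le_b1_at_distance_3[OF assms(1) abx(2,3)] .
  also have "\<dots> = b1 V E u w"
    using b1_eq adj_sym[OF abx(2)] assms(4) .
  finally show ?thesis .
qed

lemma card_nbhd_less_3_b1:
  assumes "E u w" "v \<in> V" "gdist E u v = 2" "c2 E u v \<le> b1 V E u w"
  shows "card (nbhd E w) < 3 * b1 V E u w"
proof -
  have "u \<in> V"
    using assms(1) adj_in_V by blast
  then have "b1 V E u w > 0"
    using c2_pos assms by fastforce
  then obtain v' where v': "E w v'" "v' \<in> V" "gdist E u v' = 2"
    unfolding b1_def by (auto simp: card_gt_0_iff nbhd_def sphere_def)
  have "c2 E u v' = c2 E u v"
    using c2_eq \<open>u \<in> V\<close> v' assms by blast
  moreover have "a1 E v' w = a1 E u w"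
    using a1_eq adj_sym[OF v'(1)] assms(1) .
  ultimately show ?thesis
    using card_nbhd_eq_a1_b1[OF assms(1)] a1_add_a1_le[OF assms(1) v'(1,3)] assms(4)
    by linarith
qed

end

theorem lemma6p3:
  fixes V :: "'a set" and E :: "'a \<Rightarrow> 'a \<Rightarrow> bool" and k :: nat
  assumes "graph V E" and "connected_graph V E"
    and "two_distance_transitive V E"
    and "regular V E k" and "k \<ge> 3"
  shows "(distance_transitive V E \<and> strongly_regular V E)
       \<or> (diameter V E \<ge> 3 \<and>
          (\<forall>u\<in>V. \<forall>w\<in>V. \<forall>v\<in>V. E u w \<and> gdist E u v = 2 \<longrightarrow>
              b1 V E u w \<ge> c2 E u v \<and> 3 * b1 V E u w \<ge> k + 1))"
proof -
  interpret two_distance_transitive_graph V E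
    using assms(1-3) by unfold_locales
  show ?thesis
  proof (cases "\<exists>a\<in>V. \<exists>c\<in>V. gdist E a c \<ge> 3")
    case True
    then obtain a c where ac: "a \<in> V" "c \<in> V" "gdist E a c \<ge> 3"
      by blast
    then have "diameter V E \<ge> 3"
      using gdist_le_diameter order_trans by blast
    moreover have "c2 E u v \<le> b1 V E u w \<and> k + 1 \<le> 3 * b1 V E u w"
      if "E u w" "v \<in> V" "gdist E u v = 2" for u w v
      using c2_le_b1_if_gdist_ge_3[OF ac that] card_nbhd_less_3_b1[OF that]
        assms(4) adj_in_V that(1)
      unfolding regular_def by fastforce
    ultimately show ?thesis
      by blast
  next
    case False
    then have "\<forall>u\<in>V. \<forall>v\<in>V. gdist E u v \<le> 2"
      by force
    then show ?thesis
      using distance_transitive_if_gdist_le_2 strongly_regular_if_gdist_le_2 assms(4) by blast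
  qed
qed

end
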